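(* For every countable ordinal $\lambda<\omega_1$ there is a continuous map $g_\lambda:[0,1]\to[0,1]$ such that the chain components poset $(\mathfrak{C}_{g_\lambda},\preceq)$ is order isomorphic to $(\lambda+1,\ni)$, i.e. to the reverse of the usual order on the ordinal $\lambda+1$.
   Context: For a map $g:[0,1]\to[0,1]$ with the usual metric: an $\varepsilon$-chain from $x$ to $y$ is a finite sequence $x_0=x,\dots,x_n=y$, $n\ge1$, with $|g(x_i)-x_{i+1}|<\varepsilon$; $x\,\mathcal{C}\,y$ iff for every $\varepsilon>0$ there is an $\varepsilon$-chain from $x$ to $y$; $CR_g=\{x:x\,\mathcal{C}\,x\}$; $x\,E\,y$ iff $x\,\mathcal{C}\,y$ and $y\,\mathcal{C}\,x$; $\mathfrak{C}_g=CR_g/E$ is the set of chain components, partially ordered by $[x]\preceq[y]$ iff $y\,\mathcal{C}\,x$. *)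

theory Defs
  imports "HOL-Analysis.Analysis"
begin

definition eps_chain :: "(real \<Rightarrow> real) \<Rightarrow> real \<Rightarrow> real \<Rightarrow> real \<Rightarrow> bool" where
  "eps_chain g \<epsilon> x y \<longleftrightarrow>
     (\<exists>n::nat. n \<ge> 1 \<and> (\<exists>xs::nat \<Rightarrow> real.
        xs 0 = x \<and> xs n = y \<and> (\<forall>i\<le>n. xs i \<in> {0..1}) \<and>
        (\<forall>i<n. \<bar>g (xs i) - xs (Suc i)\<bar> < \<epsilon>)))"

definition chain_rel :: "(real \<Rightarrow> real) \<Rightarrow> real \<Rightarrow> real \<Rightarrow> bool" where
  "chain_rel g x y \<longleftrightarrow> (\<forall>\<epsilon>>0. eps_chain g \<epsilon> x y)"

definition chain_recurrent :: "(real \<Rightarrow> real) \<Rightarrow> real set" where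
  "chain_recurrent g = {x \<in> {0..1}. chain_rel g x x}"

definition chain_equiv :: "(real \<Rightarrow> real) \<Rightarrow> (real \<times> real) set" where
  "chain_equiv g = {(x, y). x \<in> chain_recurrent g \<and> y \<in> chain_recurrent g \<and>
                            chain_rel g x y \<and> chain_rel g y x}"

definition chain_components :: "(real \<Rightarrow> real) \<Rightarrow> real set set" where
  "chain_components g = chain_recurrent g // chain_equiv g"

text \<open>[x] \<preceq> [y] iff y C x (independent of representatives).\<close>
definition comp_le :: "(real \<Rightarrow> real) \<Rightarrow> real set \<Rightarrow> real set \<Rightarrow> bool" where
  "comp_le g A B \<longleftrightarrow> (\<exists>x\<in>A. \<exists>y\<in>B. chain_rel g y x)"

text \<open>Successor ordinal of a well-order r (as a reflexive well-order relation):
  a new top element None is added.\<close>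
definition ord_succ :: "('a \<times> 'a) set \<Rightarrow> ('a option \<times> 'a option) set" where
  "ord_succ r = {(Some a, Some b) | a b. (a, b) \<in> r} \<union>
                {(x, None) | x. x \<in> insert None (Some ` Field r)}"

end

theory Submission
  imports Defs
begin

text \<open>
  If g is monotone with x \<le> g x, an \<epsilon>-chain with \<epsilon> < g p - p can never pass from above a
  point p to below it, while it can climb freely up to any fixed point. When the fixed points
  form a countable set F, the non-fixed points are dense, so the chain recurrent set is F \<inter> [0,1],
  the chain components are its singletons, and {a} \<preceq> {b} iff b \<le> a. The map
  x \<mapsto> x + d(x, F)/2 realises any closed F \<subseteq> [0,1] with 1 \<in> F as such a fixed point set.

  It remains to embed the countable well-order \<lambda> + 1 into [0,1] with closed image. Choose
  summable positive weights on it and send a to the total weight of its strict initial segment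
  (shifted so that the top goes to 1). This map is strictly increasing, and for x outside the
  image let a be least with x below its image: if a has an immediate predecessor b, the images
  of b and a bound a gap around x; otherwise the image of a is the supremum of the images of
  its predecessors, which all lie below x, a contradiction.
\<close>

lemma chain_rel_stays_above:
  assumes "mono g" "p < g p" "p \<le> x" "chain_rel g x y"
  shows "p < y"
proof -
  obtain n xs where "n \<ge> 1" "xs 0 = x" "xs n = y"
    and steps: "\<forall>i<n. \<bar>g (xs i) - xs (Suc i)\<bar> < g p - p"
    using assms(2,4) unfolding chain_rel_def eps_chain_def by (meson diff_gt_0_iff_gt)
  have step_above: "p < xs (Suc i)" if "i < n" "p \<le> xs i" for i
    using steps monoD[OF assms(1) \<open>p \<le> xs i\<close>] that(1) by fastforce
  have "p \<le> xs i" if "i \<le> n" for i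
    using that
  proof (induction i)
    case 0
    then show ?case using assms(3) \<open>xs 0 = x\<close> by simp
  next
    case (Suc i)
    then show ?case using step_above[of i] by simp
  qed
  moreover obtain m where "n = Suc m" using \<open>n \<ge> 1\<close> by (cases n) auto
  ultimately show ?thesis using step_above[of m] \<open>xs n = y\<close> by simp
qed

lemma eps_chain_up_to_fixpoint:
  assumes "mono g" "\<And>x. x \<le> g x" "g b = b" "0 \<le> a" "a \<le> b" "b \<le> 1" "0 < e"
  shows "eps_chain g e a b"
proof -
  define xs where "xs k = ((\<lambda>y. min b (g y + e / 2)) ^^ k) a" for k
  have xs_Suc: "xs (Suc k) = min b (g (xs k) + e / 2)" for k
    by (simp add: xs_def)
  have g_le_b: "g (xs k) \<le> b" if "xs k \<le> b" for k
    using monoD[OF assms(1) that] assms(3) by simp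
  have progress: "a \<le> xs k \<and> xs k \<le> b \<and> min b (a + k * e / 2) \<le> xs k" for k
  proof (induction k)
    case 0
    then show ?case using assms(5) by (simp add: xs_def)
  next
    case (Suc k)
    have "xs k \<le> g (xs k)" by (rule assms(2))
    moreover have "min b (a + Suc k * e / 2) \<le> g (xs k) + e / 2"
    proof (cases "a + k * e / 2 \<le> b")
      case True
      have "real (Suc k) * e / 2 = k * e / 2 + e / 2" by (simp add: algebra_simps)
      then show ?thesis using True Suc.IH \<open>xs k \<le> g (xs k)\<close> by linarith
    qed (use Suc.IH \<open>xs k \<le> g (xs k)\<close> assms(7) in linarith)
    ultimately show ?case using Suc.IH g_le_b[of k] assms(7) unfolding xs_Suc by auto
  qed
  have small_steps: "\<bar>g (xs k) - xs (Suc k)\<bar> < e" for k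
    using g_le_b[of k] progress[of k] assms(2)[of "xs k"] assms(7) unfolding xs_Suc by auto
  define n where "n = nat \<lceil>2 * (b - a) / e\<rceil> + 1"
  have "2 * (b - a) / e \<le> n" unfolding n_def by linarith
  then have "b \<le> a + n * e / 2" using assms(7) by (simp add: field_simps)
  then have "xs n = b" using progress[of n] by simp
  moreover have "xs i \<in> {0..1}" for i using progress[of i] assms(4,6) by simp
  moreover have "xs 0 = a" by (simp add: xs_def)
  ultimately show ?thesis
    unfolding eps_chain_def using small_steps by (intro exI[of _ n] conjI exI[of _ xs]) (auto simp: n_def)
qed

context
  fixes g :: "real \<Rightarrow> real"
  assumes mono: "mono g" and above_id: "\<And>x. x \<le> g x"
    and countable_fixpoints: "countable {x. g x = x}"
begin

lemma chain_rel_imp_le: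
  assumes "chain_rel g x y"
  shows "x \<le> y"
proof (rule ccontr)
  assume "\<not> x \<le> y"
  then have "uncountable {y<..<x}" by (simp add: uncountable_open_interval)
  then obtain p where p: "p \<in> {y<..<x}" "g p \<noteq> p"
    using countable_fixpoints by (metis (mono_tags, lifting) countable_subset mem_Collect_eq subsetI)
  then have "p < g p" using above_id[of p] by simp
  with chain_rel_stays_above[OF mono this _ assms] p show False by simp
qed

lemma chain_rel_fixpoints_iff:
  assumes "a \<in> {0..1}" "b \<in> {0..1}" "g a = a" "g b = b"
  shows "chain_rel g a b \<longleftrightarrow> a \<le> b"
proof
  assume "a \<le> b"
  then show "chain_rel g a b"
    unfolding chain_rel_def using eps_chain_up_to_fixpoint[OF mono above_id \<open>g b = b\<close>] assms by simp
qed (rule chain_rel_imp_le)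

lemma chain_recurrent_eq_fixpoints: "chain_recurrent g = {x \<in> {0..1}. g x = x}"
proof (intro set_eqI iffI)
  fix x assume "x \<in> chain_recurrent g"
  then have "x \<in> {0..1}" "chain_rel g x x" unfolding chain_recurrent_def by auto
  moreover have "\<not> x < g x" using chain_rel_stays_above[OF mono _ order_refl \<open>chain_rel g x x\<close>] by auto
  ultimately show "x \<in> {x \<in> {0..1}. g x = x}" using above_id[of x] by simp
next
  fix x assume "x \<in> {x \<in> {0..1}. g x = x}"
  then show "x \<in> chain_recurrent g" using chain_rel_fixpoints_iff[of x x] unfolding chain_recurrent_def by simp
qed

lemma chain_components_eq_fixpoints: "chain_components g = (\<lambda>x. {x}) ` {x \<in> {0..1}. g x = x}"
proof -
  have "chain_equiv g = Id_on (chain_recurrent g)"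
    using chain_rel_fixpoints_iff
    by (auto simp: chain_equiv_def Id_on_iff chain_recurrent_eq_fixpoints)
  then show ?thesis
    unfolding chain_components_def quotient_def chain_recurrent_eq_fixpoints by auto
qed

lemma comp_le_fixpoints_iff:
  assumes "a \<in> {0..1}" "b \<in> {0..1}" "g a = a" "g b = b"
  shows "comp_le g {a} {b} \<longleftrightarrow> b \<le> a"
  unfolding comp_le_def using chain_rel_fixpoints_iff assms by simp

end

definition drift :: "real set \<Rightarrow> real \<Rightarrow> real" where
  "drift F x = x + infdist x F / 2"

lemma drift_ge: "x \<le> drift F x"
  by (simp add: drift_def infdist_nonneg)

lemma mono_drift: "mono (drift F)"
proof
  fix x y :: real assume "x \<le> y"
  moreover have "infdist x F \<le> infdist y F + dist x y" by (rule infdist_triangle)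
  ultimately show "drift F x \<le> drift F y" by (simp add: drift_def dist_real_def)
qed

lemma drift_eq_iff: "closed F \<Longrightarrow> F \<noteq> {} \<Longrightarrow> drift F x = x \<longleftrightarrow> x \<in> F"
  by (simp add: drift_def in_closed_iff_infdist_zero)

lemma continuous_on_drift: "continuous_on S (drift F)"
  unfolding drift_def by (intro continuous_intros) auto

lemma drift_unit_interval: "1 \<in> F \<Longrightarrow> drift F ` {0..1} \<subseteq> {0..1}"
proof clarsimp
  fix x :: real assume "1 \<in> F" "0 \<le> x" "x \<le> 1"
  moreover have "infdist x F \<le> dist x 1" using \<open>1 \<in> F\<close> by (rule infdist_le)
  ultimately show "0 \<le> drift F x \<and> drift F x \<le> 1"
    using drift_ge[of x F] by (simp add: drift_def dist_real_def)
qed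

lemma
  assumes "closed F" "countable F" "F \<subseteq> {0..1}" "F \<noteq> {}"
  shows chain_components_drift: "chain_components (drift F) = (\<lambda>x. {x}) ` F"
    and comp_le_drift_iff: "x \<in> F \<Longrightarrow> y \<in> F \<Longrightarrow> comp_le (drift F) {x} {y} \<longleftrightarrow> y \<le> x"
proof -
  have fixpoints: "{x. drift F x = x} = F" using drift_eq_iff[OF assms(1,4)] by blast
  then have "countable {x. drift F x = x}" using assms(2) by simp
  note drift = mono_drift drift_ge this
  have "{x \<in> {0..1}. drift F x = x} = F" using fixpoints assms(3) by auto
  then show "chain_components (drift F) = (\<lambda>x. {x}) ` F"
    using chain_components_eq_fixpoints[OF drift] by simp
  show "x \<in> F \<Longrightarrow> y \<in> F \<Longrightarrow> comp_le (drift F) {x} {y} \<longleftrightarrow> y \<le> x"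
    using comp_le_fixpoints_iff[OF drift] fixpoints assms(3) by blast
qed

lemma drift_chain_components_order_iso:
  assumes "antisym s" "countable (Field s)" "Field s \<noteq> {}"
    and "closed (\<phi> ` Field s)" "\<phi> ` Field s \<subseteq> {0..1}"
    and order: "\<And>a b. a \<in> Field s \<Longrightarrow> b \<in> Field s \<Longrightarrow> \<phi> a \<le> \<phi> b \<longleftrightarrow> (a, b) \<in> s"
  defines "g \<equiv> drift (\<phi> ` Field s)"
  shows "\<exists>h. bij_betw h (chain_components g) (Field s) \<and>
           (\<forall>A\<in>chain_components g. \<forall>B\<in>chain_components g. comp_le g A B \<longleftrightarrow> (h B, h A) \<in> s)"
proof -
  note F = assms(4) countable_image[OF assms(2)] assms(5)
  have "\<phi> ` Field s \<noteq> {}" using assms(3) by blast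
  have components: "chain_components g = (\<lambda>a. {\<phi> a}) ` Field s"
    using chain_components_drift[OF F \<open>\<phi> ` Field s \<noteq> {}\<close>] unfolding g_def by (simp add: image_image)
  have "inj_on \<phi> (Field s)"
  proof (rule inj_onI)
    fix a b assume "a \<in> Field s" "b \<in> Field s" "\<phi> a = \<phi> b"
    then have "(a, b) \<in> s" "(b, a) \<in> s" using order by (metis order_refl)+
    then show "a = b" using antisymD[OF assms(1)] by blast
  qed
  then have bij: "bij_betw (\<lambda>a. {\<phi> a}) (Field s) (chain_components g)"
    unfolding components by (intro bij_betw_imageI) (auto simp: inj_on_def)
  define h where "h = the_inv_into (Field s) (\<lambda>a. {\<phi> a})"
  have h: "h {\<phi> a} = a" if "a \<in> Field s" for a
    unfolding h_def using the_inv_into_f_f[OF bij_betw_imp_inj_on[OF bij] that] .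
  show ?thesis
  proof (intro exI[of _ h] conjI ballI)
    show "bij_betw h (chain_components g) (Field s)"
      unfolding h_def using bij by (rule bij_betw_the_inv_into)
    fix A B assume "A \<in> chain_components g" "B \<in> chain_components g"
    then obtain a b where "a \<in> Field s" "b \<in> Field s" "A = {\<phi> a}" "B = {\<phi> b}"
      unfolding components by blast
    then show "comp_le g A B \<longleftrightarrow> (h B, h A) \<in> s"
      using comp_le_drift_iff[OF F \<open>\<phi> ` Field s \<noteq> {}\<close>] order h unfolding g_def by auto
  qed
qed

lemma countable_positive_weights:
  assumes "countable A"
  obtains w :: "'a \<Rightarrow> real" where "\<And>a. a \<in> A \<Longrightarrow> 0 < w a" "w summable_on A" "infsum w A \<le> 1"
proof -
  define e where "e = Suc \<circ> to_nat_on A"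
  define w where "w = (\<lambda>a. (1/2::real) ^ e a)"
  have inj: "inj_on e A"
    unfolding e_def using inj_on_to_nat_on[OF assms] by (simp add: inj_on_def)
  have geometric: "((\<lambda>n. (1/2::real) ^ n) has_sum 1) {1..}"
    using has_sum_geometric_from_1[of "1/2::real"] by simp
  have "e ` A \<subseteq> {1..}" by (auto simp: e_def)
  then have summable: "(\<lambda>n. (1/2::real) ^ n) summable_on e ` A"
    by (rule summable_on_subset_banach[OF has_sum_imp_summable[OF geometric]])
  then have "w summable_on A"
    using summable_on_reindex[OF inj, of "\<lambda>n. (1/2::real) ^ n"] by (simp add: w_def o_def)
  have "infsum w A = infsum (\<lambda>n. (1/2::real) ^ n) (e ` A)"
    using infsum_reindex[OF inj, of "\<lambda>n. (1/2::real) ^ n"] by (simp add: w_def o_def)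
  also have "\<dots> \<le> infsum (\<lambda>n. (1/2::real) ^ n) {1..}"
    using \<open>e ` A \<subseteq> {1..}\<close>
    by (intro infsum_mono_neutral summable has_sum_imp_summable[OF geometric]) auto
  also have "\<dots> = 1" using geometric by (rule infsumI)
  finally have "infsum w A \<le> 1" .
  moreover have "0 < w a" for a by (simp add: w_def)
  ultimately show ?thesis using that \<open>w summable_on A\<close> by blast
qed

locale weighted_well_order =
  fixes s :: "'a rel" and w :: "'a \<Rightarrow> real"
  assumes well_order: "Well_order s"
    and weight_pos: "a \<in> Field s \<Longrightarrow> 0 < w a"
    and weight_summable: "w summable_on Field s"
begin

sublocale wo_rel s
  using well_order by unfold_locales

definition rank :: "'a \<Rightarrow> real" where
  "rank a = infsum w (underS a)"

lemma summable_on_underS: "w summable_on underS a"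
  using weight_summable Order_Relation.underS_Field by (rule summable_on_subset_banach)

lemma weight_nonneg_underS: "b \<in> underS a \<Longrightarrow> 0 \<le> w b"
  by (meson less_imp_le underS_Field weight_pos)

lemma rank_nonneg: "0 \<le> rank a"
  unfolding rank_def using weight_nonneg_underS by (rule infsum_nonneg)

lemma rank_less:
  assumes "(a, b) \<in> s" "a \<noteq> b"
  shows "rank a < rank b"
proof -
  have "underS a \<subseteq> underS b" using underS_incr[OF TRANS ANTISYM assms(1)] .
  moreover have "a \<in> underS b" "a \<in> Field s" using assms by (auto simp: underS_def FieldI1)
  ultimately have "insert a (underS a) \<subseteq> underS b" by simp
  have "rank a < w a + rank a" using weight_pos[OF \<open>a \<in> Field s\<close>] by simp
  also have "\<dots> = infsum w (insert a (underS a))"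
    unfolding rank_def by (rule infsum_insert[symmetric, OF summable_on_underS underS_notIn])
  also have "\<dots> \<le> rank b"
    unfolding rank_def using \<open>insert a (underS a) \<subseteq> underS b\<close> weight_nonneg_underS
    by (intro infsum_mono_neutral summable_on_underS summable_on_subset_banach[OF summable_on_underS]) auto
  finally show ?thesis .
qed

lemma rank_le_iff:
  assumes "a \<in> Field s" "b \<in> Field s"
  shows "rank a \<le> rank b \<longleftrightarrow> (a, b) \<in> s"
proof
  assume "rank a \<le> rank b"
  then have "(b, a) \<notin> s \<or> a = b" using rank_less[of b a] by auto
  then show "(a, b) \<in> s" using TOTALS assms by metis
next
  assume "(a, b) \<in> s"
  then show "rank a \<le> rank b" using rank_less[of a b] by (cases "a = b") simp_all
qed

lemma underS_subset_total: "underS a \<subseteq> underS b \<or> underS b \<subseteq> underS a"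
proof (cases "a \<in> Field s \<and> b \<in> Field s")
  case True
  then show ?thesis using TOTALS underS_incr[OF TRANS ANTISYM] by metis
qed (auto simp: underS_empty)

lemma rank_le_at_limit:
  assumes "0 \<le> x" and below: "\<And>b. b \<in> underS a \<Longrightarrow> rank b \<le> x"
    and limit: "\<And>b. b \<in> underS a \<Longrightarrow> \<exists>c\<in>underS a. b \<in> underS c"
  shows "rank a \<le> x"
  unfolding rank_def
proof (rule infsum_le_finite_sums[OF summable_on_underS])
  fix G assume G: "finite G" "G \<subseteq> underS a"
  show "sum w G \<le> x"
  proof (cases "G = {}")
    case False
    have cover: "G \<subseteq> \<Union> (underS ` underS a)" using G(2) limit by blast
    have nonempty: "underS ` underS a \<noteq> {}" using False G(2) by blast
    have chain: "subset.chain UNIV (underS ` underS a)"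
      unfolding subset_chain_def using underS_subset_total by blast
    obtain C where "C \<in> underS ` underS a" "G \<subseteq> C"
      by (rule finite_subset_Union_chain[OF G(1) cover nonempty chain])
    then obtain c where "c \<in> underS a" "G \<subseteq> underS c" by blast
    then have "sum w G \<le> rank c"
      unfolding rank_def using weight_nonneg_underS
      by (intro finite_sum_le_infsum[OF summable_on_underS G(1)]) auto
    also have "\<dots> \<le> x" using below \<open>c \<in> underS a\<close> .
    finally show ?thesis .
  qed (simp add: \<open>0 \<le> x\<close>)
qed

lemma rank_gap:
  assumes "b \<in> underS a" and "\<And>c. c \<in> underS a \<Longrightarrow> b \<notin> underS c" and "d \<in> Field s"
  shows "rank d \<notin> {rank b<..<rank a}"
proof
  assume "rank d \<in> {rank b<..<rank a}"
  moreover have "a \<in> Field s" "b \<in> Field s" using assms(1) by (auto simp: underS_def FieldI1 FieldI2)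
  ultimately have "(b, d) \<in> s" "b \<noteq> d" "(d, a) \<in> s" "d \<noteq> a"
    using rank_le_iff \<open>d \<in> Field s\<close> by force+
  then show False using assms(2) by (auto simp: underS_def)
qed

lemma closed_rank_image:
  assumes "t \<in> Field s" and greatest: "\<And>a. a \<in> Field s \<Longrightarrow> (a, t) \<in> s"
  shows "closed (rank ` Field s)"
proof -
  have "\<exists>T. open T \<and> x \<in> T \<and> T \<inter> rank ` Field s = {}" if x: "x \<notin> rank ` Field s" for x
  proof -
    consider "x < 0" | "rank t < x" | "0 \<le> x" "x < rank t"
      using x \<open>t \<in> Field s\<close> by force
    then show ?thesis
    proof cases
      case 1
      then show ?thesis using rank_nonneg leD by (intro exI[of _ "{..<0}"]) auto
    next
      case 2
      then show ?thesis
        using greatest rank_le_iff \<open>t \<in> Field s\<close> by (intro exI[of _ "{rank t<..}"]) force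
    next
      case 3
      define A where "A = {b \<in> Field s. x < rank b}"
      have "t \<in> A" using 3 \<open>t \<in> Field s\<close> by (simp add: A_def)
      define a where "a = minim A"
      have "A \<subseteq> Field s" by (auto simp: A_def)
      then have "a \<in> A" and least: "\<And>b. b \<in> A \<Longrightarrow> (a, b) \<in> s"
        using minim_in minim_least \<open>t \<in> A\<close> unfolding a_def by blast+
      have below: "rank b < x" if "b \<in> underS a" for b
      proof -
        have "b \<in> Field s" "(b, a) \<in> s" "b \<noteq> a" using that by (auto simp: underS_def FieldI1)
        then have "(a, b) \<notin> s" using ANTISYM by (auto simp: antisym_def)
        then have "rank b \<le> x" using least \<open>b \<in> Field s\<close> by (force simp: A_def)
        moreover have "rank b \<noteq> x" using x \<open>b \<in> Field s\<close> by blast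
        ultimately show ?thesis by simp
      qed
      show ?thesis
      proof (cases "\<exists>b\<in>underS a. \<forall>c\<in>underS a. b \<notin> underS c")
        case True
        then obtain b where b: "b \<in> underS a" "\<And>c. c \<in> underS a \<Longrightarrow> b \<notin> underS c" by blast
        have "x \<in> {rank b<..<rank a}" using below[OF b(1)] \<open>a \<in> A\<close> by (simp add: A_def)
        moreover have "{rank b<..<rank a} \<inter> rank ` Field s = {}" using rank_gap[OF b] by blast
        ultimately show ?thesis by (intro exI[of _ "{rank b<..<rank a}"]) simp
      next
        case False
        then have limit: "\<And>b. b \<in> underS a \<Longrightarrow> \<exists>c\<in>underS a. b \<in> underS c" by blast
        have "\<And>b. b \<in> underS a \<Longrightarrow> rank b \<le> x" using below by (simp add: less_imp_le)
        then have "rank a \<le> x" using limit by (rule rank_le_at_limit[OF 3(1)])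
        with \<open>a \<in> A\<close> show ?thesis by (simp add: A_def)
      qed
    qed
  qed
  then show ?thesis
    unfolding closed_open open_subopen[of "- _"] by (metis ComplD disjoint_eq_subset_Compl)
qed

end

lemma closed_embedding_of_countable_well_order:
  assumes "Well_order s" "countable (Field s)"
    and "t \<in> Field s" and greatest: "\<And>a. a \<in> Field s \<Longrightarrow> (a, t) \<in> s"
  obtains \<phi> :: "'a \<Rightarrow> real"
  where "closed (\<phi> ` Field s)" "\<phi> ` Field s \<subseteq> {0..1}" "\<phi> t = 1"
    "\<And>a b. a \<in> Field s \<Longrightarrow> b \<in> Field s \<Longrightarrow> \<phi> a \<le> \<phi> b \<longleftrightarrow> (a, b) \<in> s"
proof -
  obtain w :: "'a \<Rightarrow> real"
    where w: "\<And>a. a \<in> Field s \<Longrightarrow> 0 < w a" "w summable_on Field s" "infsum w (Field s) \<le> 1"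
    using countable_positive_weights[OF assms(2)] by metis
  interpret weighted_well_order s w
    using assms(1) w(1,2) by unfold_locales
  define \<phi> where "\<phi> = (\<lambda>a. 1 - rank t + rank a)"
  have "rank t \<le> infsum w (Field s)"
    unfolding rank_def using weight_nonneg_underS w(1) Order_Relation.underS_Field[of s t]
    by (intro infsum_mono_neutral summable_on_underS w(2)) (auto intro: less_imp_le)
  then have "0 \<le> 1 - rank t" using w(3) by simp
  have "\<phi> ` Field s = (+) (1 - rank t) ` rank ` Field s"
    unfolding \<phi>_def image_image by simp
  then have "closed (\<phi> ` Field s)"
    using closed_rank_image[OF assms(3) greatest] by (simp add: closed_translation)
  moreover have "\<phi> ` Field s \<subseteq> {0..1}"
  proof
    fix x assume "x \<in> \<phi> ` Field s"
    then obtain a where "a \<in> Field s" "x = 1 - rank t + rank a" by (auto simp: \<phi>_def)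
    moreover have "rank a \<le> rank t" using rank_le_iff[OF _ assms(3)] greatest \<open>a \<in> Field s\<close> by blast
    ultimately show "x \<in> {0..1}" using rank_nonneg[of a] \<open>0 \<le> 1 - rank t\<close> by simp
  qed
  moreover have "\<phi> t = 1" by (simp add: \<phi>_def)
  moreover have "\<phi> a \<le> \<phi> b \<longleftrightarrow> (a, b) \<in> s" if "a \<in> Field s" "b \<in> Field s" for a b
    using rank_le_iff[OF that] by (simp add: \<phi>_def)
  ultimately show ?thesis by (rule that)
qed

lemma ord_succ_Some_iff [simp]: "(Some a, Some b) \<in> ord_succ r \<longleftrightarrow> (a, b) \<in> r"
  by (auto simp: ord_succ_def)

lemma ord_succ_None_Some [simp]: "(None, Some b) \<notin> ord_succ r"
  by (simp add: ord_succ_def)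

lemma ord_succ_None_iff [simp]: "(u, None) \<in> ord_succ r \<longleftrightarrow> u \<in> insert None (Some ` Field r)"
  by (auto simp: ord_succ_def)

lemma Field_ord_succ: "Field (ord_succ r) = insert None (Some ` Field r)"
proof
  show "Field (ord_succ r) \<subseteq> insert None (Some ` Field r)"
    by (auto simp: Field_def ord_succ_def intro: FieldI1 FieldI2)
  show "insert None (Some ` Field r) \<subseteq> Field (ord_succ r)"
    using ord_succ_None_iff by (blast intro: FieldI1)
qed

lemma Linear_order_ord_succ:
  assumes "Linear_order r"
  shows "Linear_order (ord_succ r)"
proof -
  have r: "refl_on (Field r) r" "trans r" "antisym r" "total_on (Field r) r"
    using assms by (auto simp: linear_order_on_def partial_order_on_def preorder_on_def)
  have "refl_on (Field (ord_succ r)) (ord_succ r)"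
    using r(1) by (auto simp: refl_on_def Field_ord_succ)
  moreover have "trans (ord_succ r)"
  proof (rule transI)
    fix u v w assume uv: "(u, v) \<in> ord_succ r" and vw: "(v, w) \<in> ord_succ r"
    show "(u, w) \<in> ord_succ r"
    proof (cases w)
      case None
      then show ?thesis using FieldI1[OF uv] by (simp add: Field_ord_succ)
    next
      case (Some c)
      then obtain b where "v = Some b" "(b, c) \<in> r" using vw by (cases v) auto
      moreover from this(1) obtain a where "u = Some a" "(a, b) \<in> r" using uv by (cases u) auto
      ultimately show ?thesis using Some transD[OF r(2)] by simp
    qed
  qed
  moreover have "antisym (ord_succ r)"
  proof (rule antisymI)
    fix u v assume "(u, v) \<in> ord_succ r" "(v, u) \<in> ord_succ r"
    then show "u = v" using antisymD[OF r(3)] by (cases u; cases v) auto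
  qed
  moreover have "total_on (Field (ord_succ r)) (ord_succ r)"
    using r(4) by (auto simp: total_on_def Field_ord_succ)
  moreover have "ord_succ r \<subseteq> Field (ord_succ r) \<times> Field (ord_succ r)"
    by (auto intro: FieldI1 FieldI2)
  ultimately show ?thesis
    by (simp add: linear_order_on_def partial_order_on_def preorder_on_def)
qed

lemma wf_ord_succ:
  assumes "wf (r - Id)"
  shows "wf (ord_succ r - Id)"
proof (rule wf_subset)
  have "wf (map_prod Some Some ` (r - Id))" using assms by (rule wf_map_prod_image) simp
  moreover have "wf (range Some \<times> {None})"
    by (rule wf_subset[OF wf_measure[of "\<lambda>u. if u = None then 1 else 0"]]) auto
  ultimately show "wf (map_prod Some Some ` (r - Id) \<union> range Some \<times> {None})"
    by (rule wf_Un) auto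
  show "ord_succ r - Id \<subseteq> map_prod Some Some ` (r - Id) \<union> range Some \<times> {None}"
    unfolding ord_succ_def by auto
qed

lemma Well_order_ord_succ: "Well_order r \<Longrightarrow> Well_order (ord_succ r)"
  unfolding well_order_on_def using Linear_order_ord_succ wf_ord_succ by blast

theorem corollary2p4:
  fixes r :: "('a \<times> 'a) set"
  assumes "Well_order r" and "countable (Field r)"
  shows "\<exists>g::real \<Rightarrow> real. continuous_on {0..1} g \<and> g ` {0..1} \<subseteq> {0..1} \<and>
           (\<exists>h. bij_betw h (chain_components g) (Field (ord_succ r)) \<and>
                (\<forall>A\<in>chain_components g. \<forall>B\<in>chain_components g.
                    comp_le g A B \<longleftrightarrow> (h B, h A) \<in> ord_succ r))"
proof -
  let ?R = "ord_succ r"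
  have "Well_order ?R" using assms(1) by (rule Well_order_ord_succ)
  moreover have "countable (Field ?R)" "None \<in> Field ?R" using assms(2) by (simp_all add: Field_ord_succ)
  moreover have "\<And>u. u \<in> Field ?R \<Longrightarrow> (u, None) \<in> ?R" by (simp add: Field_ord_succ)
  ultimately obtain \<phi> :: "'a option \<Rightarrow> real"
    where \<phi>: "closed (\<phi> ` Field ?R)" "\<phi> ` Field ?R \<subseteq> {0..1}" "\<phi> None = 1"
      "\<And>u v. u \<in> Field ?R \<Longrightarrow> v \<in> Field ?R \<Longrightarrow> \<phi> u \<le> \<phi> v \<longleftrightarrow> (u, v) \<in> ?R"
    using closed_embedding_of_countable_well_order by metis
  have "antisym ?R"
    using \<open>Well_order ?R\<close> by (simp add: well_order_on_def linear_order_on_def partial_order_on_def)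
  moreover have "1 \<in> \<phi> ` Field ?R" "Field ?R \<noteq> {}"
    using \<phi>(3) \<open>None \<in> Field ?R\<close> by (force, blast)
  ultimately show ?thesis
    using drift_chain_components_order_iso[OF _ \<open>countable (Field ?R)\<close> _ \<phi>(1,2,4)]
      continuous_on_drift drift_unit_interval by blast
qed

end
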